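(* For $m,n\in\mathbb Z$ and $r\ge0$ define $$b_{m,n}(r):=(\pi q^{-2})^{(n-r)\# r}\sum_{s=0}^{r-1}(\pi q^2)^{n-r+m(r-s-1)}q^{(m-n+r-1)(n-r+s+1)+(n-r)s}\begin{bmatrix} m+s\\ n-r+s+1\end{bmatrix}_{q,\pi}\begin{bmatrix} n-r+s\\ s\end{bmatrix}_{q,\pi},$$ $$c_{m,n}(r):=(\pi q^{-2})^{(n-r)\# r}q^{(m-n+r)n+(n-r)r}\begin{bmatrix} m+r\\ n\end{bmatrix}_{q,\pi}\begin{bmatrix} n\\ r\end{bmatrix}_{q,\pi}.$$ Then $c_{m,n}(r)=b_{m,n}(r)+b_{m,n}(r+1)$ for all $m,n\in\mathbb Z$ and $r\ge0$. In particular (taking $m=n-r$), for $0\le r\le n$, $$q^{(n-r)r}\begin{bmatrix} n\\ r\end{bmatrix}_{q,\pi}=\sum_{s=0}^r(\pi q^2)^{(n-r)(r-s)}q^{(n-r-1)s}\begin{bmatrix} n-r+s-1\\ s\end{bmatrix}_{q,\pi}.$$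
   Context: Work in $\mathbb Q(q)^\pi:=\mathbb Q(q)[\pi]/(\pi^2-1)$. For $n\in\mathbb Z$, $[n]_{q,\pi}:=\frac{(\pi q)^n-q^{-n}}{\pi q-q^{-1}}$, $[r]^!_{q,\pi}:=[r]_{q,\pi}\cdots[1]_{q,\pi}$, and for $n\in\mathbb Z$, $r\ge0$, $\begin{bmatrix} n\\ r\end{bmatrix}_{q,\pi}:=\frac{[n]_{q,\pi}\cdots[n-r+1]_{q,\pi}}{[r]^!_{q,\pi}}$, with $\begin{bmatrix} n\\ r\end{bmatrix}_{q,\pi}:=0$ if $r<0$. For $n\in\mathbb Z$, $r\ge 0$, $n\# r:=n+(n+1)+\cdots+(n+r-1)=nr+\binom r2$. *)

theory Defs
  imports "HOL-Computational_Algebra.Polynomial" "HOL-Computational_Algebra.Fraction_Field"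
begin

type_synonym Qq = "rat poly fract"

definition qvar :: Qq where "qvar = Fract [:0, 1:] 1"

text \<open>The ring Q(q)^pi = Q(q)[pi]/(pi^2 - 1): an element QP a b stands for a + b pi
  (the standard basis 1, pi of the quotient).\<close>
datatype qpi = QP (re: Qq) (im: Qq)

instantiation qpi :: comm_ring_1
begin
definition "0 = QP 0 0"
definition "1 = QP 1 0"
definition "x + y = QP (re x + re y) (im x + im y)"
definition "x - y = QP (re x - re y) (im x - im y)"
definition "- x = QP (- re x) (- im x)"
definition "x * y = QP (re x * re y + im x * im y) (re x * im y + im x * re y)"
instance
  by standard (auto simp: zero_qpi_def one_qpi_def plus_qpi_def minus_qpi_def
      uminus_qpi_def times_qpi_def algebra_simps intro: qpi.expand)
end

text \<open>Inverse: for a unit a + b pi (i.e. a^2 - b^2 \<noteq> 0) this is the ring inverse;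
  division is multiplication by the inverse.  Integer powers (powi) use this inverse.\<close>
instantiation qpi :: inverse
begin
definition "inverse x = QP (re x / (re x ^ 2 - im x ^ 2)) (- im x / (re x ^ 2 - im x ^ 2))"
definition "divide x y = x * inverse (y :: qpi)"
instance ..
end

definition qpi_of :: "Qq \<Rightarrow> qpi" where "qpi_of a = QP a 0"

definition PI :: qpi where "PI = QP 0 1"

definition Q :: qpi where "Q = qpi_of qvar"

definition qint :: "int \<Rightarrow> qpi" where
  "qint n = ((PI * Q) powi n - Q powi (- n)) / (PI * Q - Q powi (-1))"

definition qfact :: "nat \<Rightarrow> qpi" where
  "qfact r = (\<Prod>i\<in>{1..r}. qint (int i))"

definition qbinom :: "int \<Rightarrow> int \<Rightarrow> qpi" where
  "qbinom n r = (if r < 0 then 0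
     else (\<Prod>i<nat r. qint (n - int i)) / qfact (nat r))"

text \<open>n # r = n + (n+1) + ... + (n+r-1) = n r + binom(r,2).\<close>
definition hsh :: "int \<Rightarrow> nat \<Rightarrow> int" where
  "hsh n r = n * int r + int (r choose 2)"

definition bmn :: "int \<Rightarrow> int \<Rightarrow> nat \<Rightarrow> qpi" where
  "bmn m n r = (PI * Q powi (-2)) powi (hsh (n - int r) r) *
     (\<Sum>s<r. (PI * Q powi 2) powi (n - int r + m * (int r - int s - 1))
        * Q powi ((m - n + int r - 1) * (n - int r + int s + 1) + (n - int r) * int s)
        * qbinom (m + int s) (n - int r + int s + 1)
        * qbinom (n - int r + int s) (int s))"

definition cmn :: "int \<Rightarrow> int \<Rightarrow> nat \<Rightarrow> qpi" where
  "cmn m n r = (PI * Q powi (-2)) powi (hsh (n - int r) r) *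
     Q powi ((m - n + int r) * n + (n - int r) * int r)
     * qbinom (m + int r) n * qbinom n (int r)"

end

theory Submission imports Defs begin

text \<open>Since \<pi>^2 = 1, the evaluations \<pi> \<mapsto> 1 and \<pi> \<mapsto> -1 jointly embed Q(q)^\<pi> into
  Q(q) \<times> Q(q), so both identities may be proved in an arbitrary field with a parameter e,
  e^2 = 1, in place of \<pi>; all that is needed there is that e q^2 is not a root of unity, which
  makes every [i] with i > 0 nonzero.  Pascal's rule
  [n; R] = q^-R [n-1; R] + (eq)^(n-R) [n-1; R-1], applied to both binomials of the j-th partial
  term of c, writes its increment as the sum of the (j+1)-st summand of b(r+1) and the j-th
  summand of b(r); telescoping up to j = r gives c(r) = b(r) + b(r+1).  For m = n - r every
  summand of b(r) contains a factor [x; x+1] = 0, which leaves the second identity.\<close>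

definition gen_qint :: "'a::field \<Rightarrow> 'a \<Rightarrow> int \<Rightarrow> 'a" where
  "gen_qint q e n = ((e * q) powi n - q powi (- n)) / (e * q - q powi (- 1))"

definition gen_qfact :: "'a::field \<Rightarrow> 'a \<Rightarrow> nat \<Rightarrow> 'a" where
  "gen_qfact q e r = (\<Prod>i\<in>{1..r}. gen_qint q e (int i))"

definition gen_qbinom :: "'a::field \<Rightarrow> 'a \<Rightarrow> int \<Rightarrow> int \<Rightarrow> 'a" where
  "gen_qbinom q e n r = (if r < 0 then 0
     else (\<Prod>i<nat r. gen_qint q e (n - int i)) / gen_qfact q e (nat r))"

definition gen_bmn :: "'a::field \<Rightarrow> 'a \<Rightarrow> int \<Rightarrow> int \<Rightarrow> nat \<Rightarrow> 'a" where
  "gen_bmn q e m n r = (e * q powi (-2)) powi (hsh (n - int r) r) *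
     (\<Sum>s<r. (e * q powi 2) powi (n - int r + m * (int r - int s - 1))
        * q powi ((m - n + int r - 1) * (n - int r + int s + 1) + (n - int r) * int s)
        * gen_qbinom q e (m + int s) (n - int r + int s + 1)
        * gen_qbinom q e (n - int r + int s) (int s))"

definition gen_cmn :: "'a::field \<Rightarrow> 'a \<Rightarrow> int \<Rightarrow> int \<Rightarrow> nat \<Rightarrow> 'a" where
  "gen_cmn q e m n r = (e * q powi (-2)) powi (hsh (n - int r) r) *
     q powi ((m - n + int r) * n + (n - int r) * int r)
     * gen_qbinom q e (m + int r) n * gen_qbinom q e n (int r)"

lemma gen_qfact_Suc: "gen_qfact q e (Suc r) = gen_qfact q e r * gen_qint q e (int (Suc r))"
  by (simp add: gen_qfact_def)

lemma hsh_Suc: "hsh (n - int (Suc r)) (Suc r) = hsh (n - int r) r + (n - int r - 1)"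
proof -
  have "Suc r choose 2 = (r choose 2) + r" by (simp add: numeral_2_eq_2)
  thus ?thesis by (simp add: hsh_def algebra_simps)
qed

locale qpi_parameters =
  fixes q e :: "'a::field"
  assumes e_square: "e * e = 1" and q_nonzero: "q \<noteq> 0"
    and not_root_of_unity: "\<And>i::nat. i > 0 \<Longrightarrow> (e * q\<^sup>2) ^ i \<noteq> 1"
begin

abbreviation qbin :: "int \<Rightarrow> int \<Rightarrow> 'a" where "qbin \<equiv> gen_qbinom q e"

lemma e_nonzero: "e \<noteq> 0"
  using e_square by auto

lemma qint_denominator_nonzero: "e * q - q powi (- 1) \<noteq> 0"
proof
  assume "e * q - q powi (- 1) = 0"
  then have "(e * q\<^sup>2) ^ 1 = 1"
    using q_nonzero by (simp add: power2_eq_square field_simps)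
  with not_root_of_unity[of 1] show False by simp
qed

lemma gen_qint_nonzero:
  assumes "i > 0" shows "gen_qint q e (int i) \<noteq> 0"
proof
  assume "gen_qint q e (int i) = 0"
  then have "(e * q) ^ i = inverse (q ^ i)"
    using qint_denominator_nonzero by (simp add: gen_qint_def power_int_minus)
  then have "(e * q\<^sup>2) ^ i = 1"
    using q_nonzero by (simp add: power2_eq_square power_mult_distrib field_simps)
  with not_root_of_unity[OF assms] show False ..
qed

lemma gen_qfact_nonzero: "gen_qfact q e r \<noteq> 0"
  by (simp add: gen_qfact_def gen_qint_nonzero)

lemma gen_qint_add:
  "gen_qint q e (a + b) = (e * q) powi a * gen_qint q e b + q powi (- b) * gen_qint q e a"
proof -
  have "(e * q) powi (a + b) - q powi (- (a + b))
      = (e * q) powi a * ((e * q) powi b - q powi (- b))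
        + q powi (- b) * ((e * q) powi a - q powi (- a))"
    using e_nonzero q_nonzero power_int_add[of q "- b" "- a"]
    by (simp add: power_int_add algebra_simps)
  then show ?thesis
    by (simp add: gen_qint_def add_divide_distrib)
qed

lemma gen_qbinom_0 [simp]: "qbin n 0 = 1"
  by (simp add: gen_qbinom_def gen_qfact_def)

lemma gen_qbinom_pascal:
  "qbin n R = q powi (- R) * qbin (n - 1) R + (e * q) powi (n - R) * qbin (n - 1) (R - 1)"
proof (cases "R > 0")
  case False
  then consider "R < 0" | "R = 0" by linarith
  then show ?thesis by cases (simp_all add: gen_qbinom_def)
next
  case True
  define j where "j = nat R - 1"
  have R: "R = int (Suc j)"
    using True by (simp add: j_def)
  define N where "N = (\<Prod>i<j. gen_qint q e (n - 1 - int i))"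
  define F where "F = gen_qfact q e j * gen_qint q e R"
  have "(\<Prod>i<Suc j. gen_qint q e (n - int i)) = gen_qint q e n * N"
    unfolding N_def prod.lessThan_Suc_shift by (simp add: algebra_simps)
  then have top: "qbin n R = gen_qint q e n * N / F"
    by (simp add: gen_qbinom_def gen_qfact_Suc R F_def del: of_nat_Suc)
  have "(\<Prod>i<Suc j. gen_qint q e (n - 1 - int i)) = N * gen_qint q e (n - R)"
    unfolding N_def prod.lessThan_Suc R by (simp add: algebra_simps)
  then have left: "qbin (n - 1) R = N * gen_qint q e (n - R) / F"
    by (simp add: gen_qbinom_def gen_qfact_Suc R F_def del: of_nat_Suc)
  have right: "qbin (n - 1) (R - 1) = N / gen_qfact q e j"
    by (simp add: gen_qbinom_def R N_def)
  have split: "gen_qint q e n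
      = (e * q) powi (n - R) * gen_qint q e R + q powi (- R) * gen_qint q e (n - R)"
    using gen_qint_add[of "n - R" R] by simp
  have "gen_qfact q e j \<noteq> 0" "gen_qint q e R \<noteq> 0"
    using R gen_qfact_nonzero gen_qint_nonzero[of "Suc j"] by simp_all
  then show ?thesis
    unfolding top left right split by (simp add: F_def field_simps)
qed

lemma gen_qbinom_above_diagonal:
  assumes "x \<ge> 0" shows "qbin x (x + 1) = 0"
proof -
  have "gen_qint q e (x - int (nat x)) = 0"
    using assms by (simp add: gen_qint_def)
  then have "(\<Prod>i<nat (x + 1). gen_qint q e (x - int i)) = 0"
    using assms by (intro prod_zero bexI[of _ "nat x"]) auto
  then show ?thesis
    using assms by (simp add: gen_qbinom_def)
qed

lemma gen_qbinom_diagonal: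
  assumes "x \<ge> 0" shows "qbin x x = 1"
proof -
  obtain N where x: "x = int N"
    using assms nonneg_int_cases by blast
  have "(\<Prod>i<N. gen_qint q e (int N - int i)) = gen_qfact q e N"
  proof (induction N)
    case (Suc N)
    then show ?case
      unfolding prod.lessThan_Suc_shift by (simp add: gen_qfact_Suc)
  qed (simp add: gen_qfact_def)
  then show ?thesis
    using gen_qfact_nonzero[of N] by (simp add: gen_qbinom_def x)
qed

definition pq_pow :: "int \<Rightarrow> int \<Rightarrow> 'a" where
  "pq_pow a b = e powi a * q powi b"

lemma pq_pow_mult: "pq_pow a b * pq_pow c d = pq_pow (a + c) (b + d)"
  using e_nonzero q_nonzero by (simp add: pq_pow_def power_int_add algebra_simps)

lemma pq_pow_eqI:
  assumes "even (a - a')" and "b = b'" shows "pq_pow a b = pq_pow a' b'"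
proof -
  obtain c where "a = a' + 2 * c"
    using assms(1) by (metis dvd_def add_diff_cancel_left' diff_add_cancel)
  then have "e powi a = e powi a' * (e\<^sup>2) powi c"
    using e_nonzero by (simp add: power_int_add power_int_mult)
  then show ?thesis
    using e_square assms(2) by (simp add: pq_pow_def power2_eq_square)
qed

lemma q_powi_as_pq_pow: "q powi b = pq_pow 0 b"
  by (simp add: pq_pow_def)

lemma e_times_q_powi_as_pq_pow: "(e * q) powi a = pq_pow a a"
  by (simp add: pq_pow_def power_int_mult_distrib)

lemma e_times_q_powi_powi_as_pq_pow: "(e * q powi j) powi a = pq_pow a (j * a)"
  by (simp add: pq_pow_def power_int_mult_distrib power_int_mult[symmetric] mult.commute)

text \<open>With k = n - r and the common factor (\<pi> q^-2)^(k # r) pulled out,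
  b(r) is the sum of b_term over s < r, b(r + 1) the sum of b_succ_term over s \<le> r,
  and c(r) is c_partial at j = r.\<close>

definition b_term :: "int \<Rightarrow> int \<Rightarrow> nat \<Rightarrow> nat \<Rightarrow> 'a" where
  "b_term m k r s =
     pq_pow (k + m * (int r - int s - 1))
       (2 * (k + m * (int r - int s - 1)) + (m - k - 1) * (k + int s + 1) + k * int s)
     * qbin (m + int s) (k + int s + 1) * qbin (k + int s) (int s)"

definition b_succ_term :: "int \<Rightarrow> int \<Rightarrow> nat \<Rightarrow> nat \<Rightarrow> 'a" where
  "b_succ_term m k r s =
     pq_pow (m * (int r - int s)) (2 * m * (int r - int s) + (m - k) * (k + int s) + (k - 1) * int s)
     * qbin (m + int s) (k + int s) * qbin (k - 1 + int s) (int s)"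

definition c_partial :: "int \<Rightarrow> int \<Rightarrow> nat \<Rightarrow> nat \<Rightarrow> 'a" where
  "c_partial m k r j =
     pq_pow (m * (int r - int j)) (2 * m * (int r - int j) + (m - k) * (k + int j) + k * int j)
     * qbin (m + int j) (k + int j) * qbin (k + int j) (int j)"

lemma c_partial_Suc:
  "c_partial m k r (Suc j) = c_partial m k r j + b_succ_term m k r (Suc j) + b_term m k r j"
proof -
  define X1 where "X1 = qbin (m + int j) (k + int j + 1)"
  define X2 where "X2 = qbin (m + int j) (k + int j)"
  define Y1 where "Y1 = qbin (k + int j) (int j + 1)"
  define Y2 where "Y2 = qbin (k + int j) (int j)"
  define M where "M = pq_pow (m * (int r - int j - 1))
    (2 * m * (int r - int j - 1) + (m - k) * (k + int j + 1) + k * (int j + 1))"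
  have Y: "qbin (k + int j + 1) (int j + 1) = q powi (- (int j + 1)) * Y1 + (e * q) powi k * Y2"
    using gen_qbinom_pascal[of "k + int j + 1" "int j + 1"] by (simp add: Y1_def Y2_def)
  have X: "qbin (m + int j + 1) (k + int j + 1)
      = q powi (- (k + int j + 1)) * X1 + (e * q) powi (m - k) * X2"
    using gen_qbinom_pascal[of "m + int j + 1" "k + int j + 1"] by (simp add: X1_def X2_def)
  have "c_partial m k r (Suc j)
      = M * qbin (m + int j + 1) (k + int j + 1) * qbin (k + int j + 1) (int j + 1)"
    by (simp add: c_partial_def M_def algebra_simps)
  moreover have "b_succ_term m k r (Suc j)
      = M * q powi (- (int j + 1)) * (qbin (m + int j + 1) (k + int j + 1) * Y1)"
    unfolding M_def Y1_def b_succ_term_def q_powi_as_pq_pow pq_pow_mult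
    by (simp add: algebra_simps)
  moreover have "b_term m k r j = M * (e * q) powi k * q powi (- (k + int j + 1)) * X1 * Y2"
    unfolding M_def X1_def Y2_def b_term_def q_powi_as_pq_pow e_times_q_powi_as_pq_pow pq_pow_mult
    by (simp add: algebra_simps)
  moreover have "c_partial m k r j = M * (e * q) powi k * (e * q) powi (m - k) * X2 * Y2"
    unfolding M_def X2_def Y2_def c_partial_def q_powi_as_pq_pow e_times_q_powi_as_pq_pow pq_pow_mult
    by (simp add: algebra_simps)
  ultimately show ?thesis
    unfolding X Y by (simp add: algebra_simps)
qed

lemma c_partial_telescope:
  "(\<Sum>s\<le>j. b_succ_term m k r s) + (\<Sum>s<j. b_term m k r s) = c_partial m k r j"
proof (induction j)
  case 0
  then show ?case by (simp add: b_succ_term_def c_partial_def)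
next
  case (Suc j)
  then show ?case by (simp add: c_partial_Suc algebra_simps del: of_nat_Suc)
qed

abbreviation prefactor :: "int \<Rightarrow> nat \<Rightarrow> 'a" where
  "prefactor k r \<equiv> (e * q powi (- 2)) powi (hsh k r)"

lemma gen_bmn_as_b_term:
  "gen_bmn q e m n r = prefactor (n - int r) r * (\<Sum>s<r. b_term m (n - int r) r s)"
proof -
  have "(e * q powi 2) powi (n - int r + m * (int r - int s - 1))
        * q powi ((m - n + int r - 1) * (n - int r + int s + 1) + (n - int r) * int s)
      = pq_pow (n - int r + m * (int r - int s - 1))
          (2 * (n - int r + m * (int r - int s - 1)) + (m - (n - int r) - 1) * (n - int r + int s + 1)
           + (n - int r) * int s)" for s
    unfolding e_times_q_powi_powi_as_pq_pow unfolding q_powi_as_pq_pow pq_pow_mult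
    by (simp add: algebra_simps)
  then show ?thesis
    by (simp add: gen_bmn_def b_term_def)
qed

lemma b_term_Suc:
  "(e * q powi (- 2)) powi (k - 1) * b_term m (k - 1) (Suc r) s = b_succ_term m k r s"
proof -
  have "(e * q powi (- 2)) powi (k - 1) * pq_pow (k - 1 + m * (int (Suc r) - int s - 1))
          (2 * (k - 1 + m * (int (Suc r) - int s - 1)) + (m - (k - 1) - 1) * (k - 1 + int s + 1)
           + (k - 1) * int s)
      = pq_pow (m * (int r - int s)) (2 * m * (int r - int s) + (m - k) * (k + int s) + (k - 1) * int s)"
    unfolding e_times_q_powi_powi_as_pq_pow pq_pow_mult
    by (rule pq_pow_eqI) (simp_all add: algebra_simps)
  moreover have "k - 1 + int s + 1 = k + int s"
    by simp
  ultimately show ?thesis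
    by (simp add: b_term_def b_succ_term_def mult.assoc)
qed

lemma gen_bmn_Suc_as_b_succ_term:
  "gen_bmn q e m n (Suc r) = prefactor (n - int r) r * (\<Sum>s\<le>r. b_succ_term m (n - int r) r s)"
proof -
  have k: "n - int (Suc r) = n - int r - 1"
    by simp
  have "prefactor (n - int r - 1) (Suc r)
      = prefactor (n - int r) r * (e * q powi (- 2)) powi (n - int r - 1)"
    using e_nonzero q_nonzero hsh_Suc[of n r] unfolding k by (simp add: power_int_add)
  then have "gen_bmn q e m n (Suc r) = prefactor (n - int r) r *
      (\<Sum>s<Suc r. (e * q powi (- 2)) powi (n - int r - 1) * b_term m (n - int r - 1) (Suc r) s)"
    unfolding gen_bmn_as_b_term k sum_distrib_left by (simp add: mult.assoc)
  then show ?thesis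
    by (simp only: b_term_Suc lessThan_Suc_atMost)
qed

lemma gen_cmn_as_c_partial:
  "gen_cmn q e m n r = prefactor (n - int r) r * c_partial m (n - int r) r r"
proof -
  have "q powi ((m - n + int r) * n + (n - int r) * int r)
      = pq_pow 0 ((m - (n - int r)) * (n - int r + int r) + (n - int r) * int r)"
    unfolding q_powi_as_pq_pow by (simp add: algebra_simps)
  then show ?thesis
    by (simp add: gen_cmn_def c_partial_def mult.assoc)
qed

theorem gen_cmn_eq_gen_bmn_add:
  "gen_cmn q e m n r = gen_bmn q e m n r + gen_bmn q e m n (Suc r)"
  unfolding gen_bmn_Suc_as_b_succ_term
  unfolding gen_cmn_as_c_partial gen_bmn_as_b_term c_partial_telescope[symmetric]
  by (simp add: algebra_simps)

theorem gen_qbinom_expansion: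
  assumes "int r \<le> n"
  shows "q powi ((n - int r) * int r) * qbin n (int r)
    = (\<Sum>s\<le>r. (e * q powi 2) powi ((n - int r) * (int r - int s))
              * q powi ((n - int r - 1) * int s) * qbin (n - int r + int s - 1) (int s))"
proof -
  define k where "k = n - int r"
  have "k \<ge> 0"
    using assms by (simp add: k_def)
  have "b_term k k r s = 0" for s
    using gen_qbinom_above_diagonal[of "k + int s"] assms by (simp add: b_term_def k_def)
  moreover have "c_partial k k r r = q powi (k * int r) * qbin n (int r)"
    using gen_qbinom_diagonal[of n] assms by (simp add: c_partial_def k_def q_powi_as_pq_pow)
  moreover have "b_succ_term k k r s = (e * q powi 2) powi (k * (int r - int s))
      * q powi ((k - 1) * int s) * qbin (k + int s - 1) (int s)" for s
  proof -
    have powers: "(e * q powi 2) powi (k * (int r - int s)) * q powi ((k - 1) * int s)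
        = pq_pow (k * (int r - int s)) (2 * k * (int r - int s) + (k - k) * (k + int s) + (k - 1) * int s)"
      unfolding e_times_q_powi_powi_as_pq_pow unfolding q_powi_as_pq_pow pq_pow_mult
      by (simp add: algebra_simps)
    have index: "k - 1 + int s = k + int s - 1"
      by simp
    show ?thesis
      using powers gen_qbinom_diagonal[of "k + int s"] \<open>k \<ge> 0\<close> unfolding b_succ_term_def index
      by simp
  qed
  ultimately show ?thesis
    using c_partial_telescope[of k k r r] by (simp add: k_def)
qed

end

definition eval_pi :: "Qq \<Rightarrow> qpi \<Rightarrow> Qq" where
  "eval_pi e x = re x + e * im x"

text \<open>On units the inverse of Defs (division by re^2 - im^2) is the ring inverse;
  elsewhere it is the junk value 0.\<close>

definition qpi_unit :: "qpi \<Rightarrow> bool" where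
  "qpi_unit x \<longleftrightarrow> eval_pi 1 x \<noteq> 0 \<and> eval_pi (- 1) x \<noteq> 0"

lemma eval_pi_add [simp]: "eval_pi e (x + y) = eval_pi e x + eval_pi e y"
  by (simp add: eval_pi_def plus_qpi_def algebra_simps)

lemma eval_pi_diff [simp]: "eval_pi e (x - y) = eval_pi e x - eval_pi e y"
  by (simp add: eval_pi_def minus_qpi_def algebra_simps)

lemma eval_pi_0 [simp]: "eval_pi e 0 = 0"
  by (simp add: eval_pi_def zero_qpi_def)

lemma eval_pi_1 [simp]: "eval_pi e 1 = 1"
  by (simp add: eval_pi_def one_qpi_def)

lemma eval_pi_PI [simp]: "eval_pi e PI = e"
  by (simp add: eval_pi_def PI_def)

lemma eval_pi_Q [simp]: "eval_pi e Q = qvar"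
  by (simp add: eval_pi_def Q_def qpi_of_def)

lemma eval_pi_sum: "eval_pi e (sum f A) = (\<Sum>a\<in>A. eval_pi e (f a))"
  by (induction A rule: infinite_finite_induct) simp_all

lemma Fract_power: "Fract a 1 ^ k = Fract (a ^ k) 1"
  by (induction k) (simp_all add: One_fract_def)

lemma qvar_nonzero: "qvar \<noteq> 0"
  by (simp add: qvar_def Zero_fract_def eq_fract)

lemma qvar_power_neq_one:
  assumes "k > 0" shows "qvar ^ k \<noteq> 1"
proof -
  have "[:0, 1 :: rat:] ^ k \<noteq> 1"
    using assms by (metis degree_1 degree_linear_power less_numeral_extra(3))
  then show ?thesis
    by (simp add: qvar_def Fract_power One_fract_def eq_fract)
qed

lemma qvar_power_neq_minus_one:
  assumes "k > 0" shows "qvar ^ k \<noteq> - 1"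
proof -
  have "[:0, 1 :: rat:] ^ k \<noteq> - 1"
    using assms by (metis degree_1 degree_minus degree_linear_power less_numeral_extra(3))
  then show ?thesis
    by (simp add: qvar_def Fract_power One_fract_def eq_fract)
qed

context
  fixes e :: Qq
  assumes e_sign: "e = 1 \<or> e = - 1"
begin

lemma eval_pi_mult: "eval_pi e (x * y) = eval_pi e x * eval_pi e y"
proof -
  have "eval_pi e x * eval_pi e y
      = re x * re y + (e * e) * (im x * im y) + e * (re x * im y + im x * re y)"
    by (simp add: eval_pi_def algebra_simps)
  moreover have "e * e = 1"
    using e_sign by auto
  ultimately show ?thesis
    by (simp add: eval_pi_def times_qpi_def)
qed

lemma eval_pi_power: "eval_pi e (x ^ k) = eval_pi e x ^ k"
  by (induction k) (simp_all add: eval_pi_mult)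

lemma eval_pi_prod: "eval_pi e (prod f A) = (\<Prod>a\<in>A. eval_pi e (f a))"
  by (induction A rule: infinite_finite_induct) (simp_all add: eval_pi_mult)

lemma eval_pi_inverse:
  assumes "qpi_unit x" shows "eval_pi e (inverse x) = inverse (eval_pi e x)"
proof -
  have norm: "re x ^ 2 - im x ^ 2 = eval_pi e x * eval_pi (- e) x"
    using e_sign by (auto simp: eval_pi_def power2_eq_square algebra_simps)
  have "eval_pi e (inverse x) = eval_pi (- e) x / (eval_pi e x * eval_pi (- e) x)"
    unfolding norm[symmetric] by (simp add: eval_pi_def inverse_qpi_def diff_divide_distrib)
  also have "\<dots> = inverse (eval_pi e x)"
    using assms e_sign by (auto simp: qpi_unit_def inverse_eq_divide)
  finally show ?thesis .
qed

lemma eval_pi_powi: "qpi_unit x \<Longrightarrow> eval_pi e (x powi n) = eval_pi e x powi n"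
  by (simp add: power_int_def eval_pi_power eval_pi_inverse)

lemma eval_pi_divide: "qpi_unit y \<Longrightarrow> eval_pi e (x / y) = eval_pi e x / eval_pi e y"
  by (simp add: divide_qpi_def eval_pi_mult eval_pi_inverse divide_inverse)

lemma qpi_parameters_qvar: "qpi_parameters qvar e"
proof
  show "e * e = 1"
    using e_sign by auto
  show "qvar \<noteq> 0"
    by (rule qvar_nonzero)
  fix i :: nat
  assume "i > 0"
  then have "qvar ^ (2 * i) \<noteq> 1" "qvar ^ (2 * i) \<noteq> - 1"
    using qvar_power_neq_one qvar_power_neq_minus_one by simp_all
  moreover have "(e * qvar\<^sup>2) ^ i = e ^ i * qvar ^ (2 * i)"
    by (simp add: power_mult_distrib power_mult)
  moreover have "e ^ i = 1 \<or> e ^ i = - 1"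
    using e_sign by (cases "even i") auto
  ultimately show "(e * qvar\<^sup>2) ^ i \<noteq> 1"
    by auto
qed

end

lemma qpi_unit_mult: "qpi_unit x \<Longrightarrow> qpi_unit y \<Longrightarrow> qpi_unit (x * y)"
  by (simp add: qpi_unit_def eval_pi_mult)

lemma qpi_unit_powi: "qpi_unit x \<Longrightarrow> qpi_unit (x powi n)"
  by (simp add: qpi_unit_def eval_pi_powi)

lemma qpi_unit_power: "qpi_unit x \<Longrightarrow> qpi_unit (x ^ k)"
  by (simp add: qpi_unit_def eval_pi_power)

lemma qpi_unit_PI: "qpi_unit PI"
  by (simp add: qpi_unit_def)

lemma qpi_unit_Q: "qpi_unit Q"
  using qvar_nonzero by (simp add: qpi_unit_def)

lemma qpi_unit_qint_denominator: "qpi_unit (PI * Q - Q powi (- 1))"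
  using qpi_parameters.qint_denominator_nonzero[OF qpi_parameters_qvar[of 1]]
    qpi_parameters.qint_denominator_nonzero[OF qpi_parameters_qvar[of "- 1"]]
    eval_pi_powi[OF _ qpi_unit_Q, of _ "- 1"]
  by (simp add: qpi_unit_def eval_pi_mult del: power_int_minus1_right)

lemma eval_pi_qint: "e = 1 \<or> e = - 1 \<Longrightarrow> eval_pi e (qint n) = gen_qint qvar e n"
  by (simp add: qint_def gen_qint_def eval_pi_divide eval_pi_mult eval_pi_powi
      qpi_unit_Q qpi_unit_mult qpi_unit_PI qpi_unit_qint_denominator del: power_int_minus1_right)

lemma eval_pi_qfact: "e = 1 \<or> e = - 1 \<Longrightarrow> eval_pi e (qfact r) = gen_qfact qvar e r"
  by (simp add: qfact_def gen_qfact_def eval_pi_prod eval_pi_qint)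

lemma qpi_unit_qfact: "qpi_unit (qfact r)"
  using qpi_parameters.gen_qfact_nonzero[OF qpi_parameters_qvar]
  by (simp add: qpi_unit_def eval_pi_qfact)

lemma eval_pi_qbinom: "e = 1 \<or> e = - 1 \<Longrightarrow> eval_pi e (qbinom n k) = gen_qbinom qvar e n k"
  by (simp add: qbinom_def gen_qbinom_def eval_pi_divide eval_pi_prod eval_pi_qint eval_pi_qfact
      qpi_unit_qfact)

lemma eval_pi_bmn: "e = 1 \<or> e = - 1 \<Longrightarrow> eval_pi e (bmn m n r) = gen_bmn qvar e m n r"
  by (simp add: bmn_def gen_bmn_def eval_pi_sum eval_pi_mult eval_pi_power eval_pi_powi eval_pi_qbinom
      qpi_unit_mult qpi_unit_power qpi_unit_powi qpi_unit_PI qpi_unit_Q)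

lemma eval_pi_cmn: "e = 1 \<or> e = - 1 \<Longrightarrow> eval_pi e (cmn m n r) = gen_cmn qvar e m n r"
  by (simp add: cmn_def gen_cmn_def eval_pi_mult eval_pi_power eval_pi_powi eval_pi_qbinom
      qpi_unit_mult qpi_unit_power qpi_unit_powi qpi_unit_PI qpi_unit_Q)

lemma two_neq_zero_Qq: "(2 :: Qq) \<noteq> 0"
proof -
  have "(2 :: Qq) = Fract 2 1"
    using of_nat_fract[of 2] by simp
  moreover have "Fract (2 :: rat poly) 1 \<noteq> Fract 0 1"
    by (simp add: eq_fract)
  ultimately show ?thesis
    by (simp add: Zero_fract_def)
qed

lemma qpi_eqI:
  assumes "eval_pi 1 x = eval_pi 1 y" and "eval_pi (- 1) x = eval_pi (- 1) y"
  shows "x = y"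
proof -
  have sum: "re x + im x = re y + im y" and diff: "re x - im x = re y - im y"
    using assms by (simp_all add: eval_pi_def)
  have "2 * re x = (re x + im x) + (re x - im x)"
    by simp
  also have "\<dots> = 2 * re y"
    unfolding sum diff by simp
  finally have "re x = re y"
    using two_neq_zero_Qq by simp
  with sum show ?thesis
    by (simp add: qpi.expand)
qed

theorem mainTheorem3:
  shows "(\<forall>(m::int) (n::int) (r::nat). cmn m n r = bmn m n r + bmn m n (Suc r))
    \<and> (\<forall>(n::int) (r::nat). int r \<le> n \<longrightarrow>
         Q powi ((n - int r) * int r) * qbinom n (int r)
         = (\<Sum>s\<le>r. (PI * Q powi 2) powi ((n - int r) * (int r - int s))
              * Q powi ((n - int r - 1) * int s)
              * qbinom (n - int r + int s - 1) (int s)))"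
proof (intro conjI allI impI)
  fix m n :: int and r :: nat
  show "cmn m n r = bmn m n r + bmn m n (Suc r)"
    by (rule qpi_eqI) (simp_all add: eval_pi_cmn eval_pi_bmn
        qpi_parameters.gen_cmn_eq_gen_bmn_add[OF qpi_parameters_qvar])
next
  fix n :: int and r :: nat
  assume "int r \<le> n"
  then show "Q powi ((n - int r) * int r) * qbinom n (int r)
         = (\<Sum>s\<le>r. (PI * Q powi 2) powi ((n - int r) * (int r - int s))
              * Q powi ((n - int r - 1) * int s)
              * qbinom (n - int r + int s - 1) (int s))"
    by (intro qpi_eqI) (simp_all add: eval_pi_sum eval_pi_mult eval_pi_power eval_pi_powi
        eval_pi_qbinom qpi_unit_mult qpi_unit_power qpi_unit_PI qpi_unit_Q
        qpi_parameters.gen_qbinom_expansion[OF qpi_parameters_qvar])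
qed

end
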